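(* Let $n\ge 2$, let $A$ be a set of $n$ agents, and let $v$ assign a real value $v(C)$ to every nonempty $C\subseteq A$. Let $S_1,S_2\subseteq\{2,\dots,n\}$ be two coalition size sets, each containing $n$. Suppose that every integer partition of $n$ is reachable from the node $[n]$ in $G_{S_1}$ or in $G_{S_2}$ (i.e., for every integer partition $P$ of $n$ there is $i\in\{1,2\}$ and a directed path from $[n]$ to $P$ in $G_{S_i}$). Then $$\max\big(V^{S_1}(A),\,V^{S_2}(A)\big)\;=\;\max_{\mathcal{CS}\in\Pi(A)}\ \sum_{C\in\mathcal{CS}} v(C),$$ i.e., the CDP procedure run with the pair $(S_1,S_2)$ returns the value of an optimal coalition structure.
   Context: A coalition structure of $A$ is a partition of $A$ into nonempty pairwise disjoint coalitions; $\Pi(A)$ is the set of all coalition structures, and the value of $\mathcal{CS}$ is $\sum_{C\in\mathcal{CS}}v(C)$. Restricted integer partition graph: for a set $S\subseteq\{2,\dots,n\}$, $G_S$ is the directed graph whose nodes are the integer partitions of $n$ (multisets of positive integers summing to $n$), with an edge from $P$ to $P'$ whenever $P'$ is obtained from $P$ by replacing a single part $x$ of $P$ with $x\in S$ by two positive parts $x_1,x_2$ with $x_1+x_2=x$. The node $[n]$ is the partition with one part. Dynamic program with size set $S$: initialize a table $V_t(C)=v(C)$ for every nonempty $C\subseteq A$. Then, for each $s\in S$ in increasing order, for each coalition $C\subseteq A$ with $|C|=s$, and for each unordered pair $\{C_1,C_2\}$ of nonempty disjoint sets with $C_1\cup C_2=C$, set $V_t(C)\leftarrow\max\big(V_t(C),\,V_t(C_1)+V_t(C_2)\big)$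 (using the current table values). Let $V^{S}(A)$ denote the final value of $V_t(A)$ after this procedure. CDP runs this program separately (with fresh tables) for $S_1$ and for $S_2$ and returns the larger of $V^{S_1}(A)$ and $V^{S_2}(A)$. *)

theory Defs
  imports Complex_Main "HOL-Library.Multiset" "HOL-Library.Disjoint_Sets"
begin

definition int_partition :: "nat \<Rightarrow> nat multiset \<Rightarrow> bool" where
  "int_partition n P \<longleftrightarrow> 0 \<notin># P \<and> sum_mset P = n"

definition G_edge :: "nat set \<Rightarrow> nat multiset \<Rightarrow> nat multiset \<Rightarrow> bool" where
  "G_edge S P P' \<longleftrightarrow> (\<exists>x x1 x2. x \<in># P \<and> x \<in> S \<and> 0 < x1 \<and> 0 < x2 \<and> x1 + x2 = x
                        \<and> P' = P - {#x#} + {#x1, x2#})"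

definition G_reach :: "nat \<Rightarrow> nat set \<Rightarrow> nat multiset \<Rightarrow> nat multiset \<Rightarrow> bool" where
  "G_reach n S = (\<lambda>P P'. int_partition n P \<and> int_partition n P' \<and> G_edge S P P')\<^sup>*\<^sup>*"

(* Parts have strictly smaller size, so they are not modified during this round;
   hence a simultaneous update is the same as the sequential one. *)
definition dp_round :: "nat \<Rightarrow> ('a set \<Rightarrow> real) \<Rightarrow> ('a set \<Rightarrow> real)" where
  "dp_round s f = (\<lambda>C. if card C = s
      then Max ({f C} \<union> {f C1 + f (C - C1) | C1. C1 \<subseteq> C \<and> C1 \<noteq> {} \<and> C1 \<noteq> C})
      else f C)"

definition dp_table :: "nat set \<Rightarrow> ('a set \<Rightarrow> real) \<Rightarrow> ('a set \<Rightarrow> real)" where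
  "dp_table S v = foldl (\<lambda>f s. dp_round s f) v (sorted_list_of_set S)"

definition dp_value :: "nat set \<Rightarrow> ('a set \<Rightarrow> real) \<Rightarrow> 'a set \<Rightarrow> real" where
  "dp_value S v A = dp_table S v A"

definition cs_value :: "('a set \<Rightarrow> real) \<Rightarrow> 'a set set \<Rightarrow> real" where
  "cs_value v CS = (\<Sum>C\<in>CS. v C)"

end

theory Submission
  imports Defs
begin

text \<open>
  Every value the dynamic program stores for a coalition \<open>C\<close> is the value of some coalition
  structure of \<open>C\<close>, so neither run exceeds the optimum. Conversely, the table produced with
  size set \<open>S\<close> satisfies \<open>T C\<^sub>1 + T (C - C\<^sub>1) \<le> T C\<close> whenever \<open>|C| \<in> S\<close>. Read backwards, a
  path from \<open>[n]\<close> in \<open>G\<^sub>S\<close> to the size multiset of an optimal structure merges two blocks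
  into one block of size in \<open>S\<close> at each step, so along it \<open>T A\<close> dominates the sum of \<open>T\<close> over
  the blocks, which dominates their values under \<open>v\<close>.
\<close>

definition dp_rounds :: "nat list \<Rightarrow> ('a set \<Rightarrow> real) \<Rightarrow> 'a set \<Rightarrow> real" where
  "dp_rounds L f = foldl (\<lambda>f s. dp_round s f) f L"

lemma dp_rounds_Nil [simp]: "dp_rounds [] f = f"
  and dp_rounds_Cons [simp]: "dp_rounds (s # L) f = dp_rounds L (dp_round s f)"
  by (simp_all add: dp_rounds_def)

lemma dp_rounds_append: "dp_rounds (L1 @ L2) f = dp_rounds L2 (dp_rounds L1 f)"
  by (simp add: dp_rounds_def)

lemma dp_table_eq_dp_rounds: "dp_table S v = dp_rounds (sorted_list_of_set S) v"
  by (simp add: dp_table_def dp_rounds_def)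

lemma finite_split_values:
  "finite C \<Longrightarrow> finite {f C1 + f (C - C1) | C1. C1 \<subseteq> C \<and> C1 \<noteq> {} \<and> C1 \<noteq> C}"
  by (rule finite_subset[of _ "(\<lambda>C1. f C1 + f (C - C1)) ` Pow C"]) auto

lemma dp_round_other [simp]: "card C \<noteq> s \<Longrightarrow> dp_round s f C = f C"
  by (simp add: dp_round_def)

lemma dp_round_ge: "finite C \<Longrightarrow> f C \<le> dp_round s f C"
  by (auto simp: dp_round_def finite_split_values intro: Max_ge)

lemma dp_round_split_ge:
  "\<lbrakk>finite C; card C = s; C1 \<subseteq> C; C1 \<noteq> {}; C1 \<noteq> C\<rbrakk>
   \<Longrightarrow> f C1 + f (C - C1) \<le> dp_round s f C"
  by (auto simp: dp_round_def finite_split_values intro!: Max_ge)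

lemma dp_round_cases:
  assumes "finite C"
  obtains "dp_round s f C = f C"
    | C1 where "C1 \<subseteq> C" "C1 \<noteq> {}" "C1 \<noteq> C" "dp_round s f C = f C1 + f (C - C1)"
proof -
  let ?M = "{f C} \<union> {f C1 + f (C - C1) | C1. C1 \<subseteq> C \<and> C1 \<noteq> {} \<and> C1 \<noteq> C}"
  have "Max ?M \<in> ?M"
    using assms by (intro Max_in) (auto simp: finite_split_values)
  then show thesis
    using that by (cases "card C = s") (auto simp: dp_round_def)
qed

lemma dp_rounds_ge: "finite C \<Longrightarrow> f C \<le> dp_rounds L f C"
  by (induction L arbitrary: f) (auto intro: order_trans dp_round_ge)

lemma dp_rounds_other: "card C \<notin> set L \<Longrightarrow> dp_rounds L f C = f C"
  by (induction L arbitrary: f) auto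

lemma dp_rounds_split_ge:
  assumes "sorted L" "distinct L" "card C \<in> set L" "finite C" "C1 \<subseteq> C" "C1 \<noteq> {}" "C1 \<noteq> C"
  shows "dp_rounds L f C1 + dp_rounds L f (C - C1) \<le> dp_rounds L f C"
proof -
  txt \<open>Both parts are smaller than \<open>C\<close>, so their entries are final before round \<open>card C\<close>.\<close>
  obtain L1 L2 where L: "L = L1 @ card C # L2"
    using assms(3) by (meson split_list)
  have later: "card C < s" if "s \<in> set L2" for s
    using assms(1,2) that unfolding L by (auto simp: sorted_append order.order_iff_strict)
  have "card C1 < card C" "card (C - C1) < card C"
    using assms(4-7) by (auto intro!: psubset_card_mono)
  moreover have "dp_rounds L f B = dp_rounds L1 f B" if "card B < card C" for B
  proof -
    have "card B \<notin> set (card C # L2)"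
      using that later by fastforce
    then show ?thesis
      by (simp add: L dp_rounds_append dp_rounds_other del: dp_rounds_Cons)
  qed
  moreover have "dp_rounds L f C = dp_round (card C) (dp_rounds L1 f) C"
    using later dp_rounds_other[of C L2] by (fastforce simp: L dp_rounds_append)
  ultimately show ?thesis
    using assms(4-7) by (simp add: dp_round_split_ge)
qed

lemma dp_table_ge: "finite C \<Longrightarrow> v C \<le> dp_table S v C"
  by (simp add: dp_table_eq_dp_rounds dp_rounds_ge)

lemma dp_table_split_ge:
  "\<lbrakk>finite S; card C \<in> S; finite C; C1 \<subseteq> C; C1 \<noteq> {}; C1 \<noteq> C\<rbrakk>
   \<Longrightarrow> dp_table S v C1 + dp_table S v (C - C1) \<le> dp_table S v C"
  by (simp add: dp_table_eq_dp_rounds dp_rounds_split_ge)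

definition cs_values :: "('a set \<Rightarrow> real) \<Rightarrow> 'a set \<Rightarrow> real set" where
  "cs_values v C = {cs_value v CS | CS. partition_on C CS}"

lemma finite_cs_values: "finite C \<Longrightarrow> finite (cs_values v C)"
proof -
  assume "finite C"
  have "cs_values v C = cs_value v ` {CS. partition_on C CS}"
    by (auto simp: cs_values_def)
  then show ?thesis
    using finitely_many_partition_on[OF \<open>finite C\<close>] by simp
qed

lemma partition_on_Un:
  "\<lbrakk>partition_on C1 P1; partition_on C2 P2; C1 \<inter> C2 = {}\<rbrakk> \<Longrightarrow> partition_on (C1 \<union> C2) (P1 \<union> P2)"
  by (auto simp: partition_on_def intro: disjoint_union)

lemma cs_values_add:
  assumes "a \<in> cs_values v C1" "b \<in> cs_values v C2" "C1 \<inter> C2 = {}" "finite C1" "finite C2"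
  shows "a + b \<in> cs_values v (C1 \<union> C2)"
proof -
  obtain P1 P2 where P: "partition_on C1 P1" "partition_on C2 P2"
    and ab: "a = cs_value v P1" "b = cs_value v P2"
    using assms(1,2) by (auto simp: cs_values_def)
  have "P1 \<inter> P2 = {}"
  proof (rule ccontr)
    assume "P1 \<inter> P2 \<noteq> {}"
    then obtain X where "X \<in> P1" "X \<in> P2" "X \<noteq> {}"
      using partition_onD3[OF P(1)] by blast
    then show False
      using partition_onD1[OF P(1)] partition_onD1[OF P(2)] assms(3) by blast
  qed
  then have "cs_value v (P1 \<union> P2) = a + b"
    using P assms(4,5) by (simp add: ab cs_value_def finite_elements sum.union_disjoint)
  then show ?thesis
    using partition_on_Un[OF P assms(3)] unfolding cs_values_def by (metis (mono_tags) mem_Collect_eq)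
qed

lemma dp_round_in_cs_values:
  assumes f: "\<And>B. finite B \<Longrightarrow> B \<noteq> {} \<Longrightarrow> f B \<in> cs_values v B"
    and C: "finite C" "C \<noteq> {}"
  shows "dp_round s f C \<in> cs_values v C"
  using C(1)
proof (cases rule: dp_round_cases[where s = s and f = f])
  case 1
  then show ?thesis using f C by simp
next
  case (2 C1)
  have "f C1 + f (C - C1) \<in> cs_values v (C1 \<union> (C - C1))"
    using 2 C by (intro cs_values_add f) (auto intro: finite_subset)
  then show ?thesis
    using 2 by (simp add: Un_absorb1)
qed

lemma dp_rounds_in_cs_values:
  "\<lbrakk>\<And>B. finite B \<Longrightarrow> B \<noteq> {} \<Longrightarrow> f B \<in> cs_values v B; finite C; C \<noteq> {}\<rbrakk>
   \<Longrightarrow> dp_rounds L f C \<in> cs_values v C"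
  by (induction L arbitrary: f) (auto intro: dp_round_in_cs_values)

lemma value_in_cs_values: "\<lbrakk>finite C; C \<noteq> {}\<rbrakk> \<Longrightarrow> v C \<in> cs_values v C"
  unfolding cs_values_def cs_value_def
  by (rule CollectI, rule exI[of _ "{C}"]) (simp add: partition_on_space)

lemma dp_value_le_Max_cs_values:
  assumes "finite A" "A \<noteq> {}"
  shows "dp_value S v A \<le> Max (cs_values v A)"
proof -
  have "dp_value S v A \<in> cs_values v A"
    unfolding dp_value_def dp_table_eq_dp_rounds
    using assms by (intro dp_rounds_in_cs_values value_in_cs_values)
  then show ?thesis
    using assms by (simp add: finite_cs_values)
qed

definition block_sizes :: "'a set set \<Rightarrow> nat multiset" where
  "block_sizes CS = image_mset card (mset_set CS)"

lemma int_partition_block_sizes: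
  assumes "finite A" "partition_on A CS"
  shows "int_partition (card A) (block_sizes CS)"
proof -
  have CS: "finite CS" "\<And>C. C \<in> CS \<Longrightarrow> finite C \<and> C \<noteq> {}"
    using assms finite_elements by (auto simp: partition_on_def intro: finite_subset)
  then have "0 \<notin># block_sizes CS"
    by (auto simp: block_sizes_def)
  moreover have "sum_mset (block_sizes CS) = card A"
  proof -
    have "sum_mset (block_sizes CS) = (\<Sum>C\<in>CS. card C)"
      by (simp add: block_sizes_def sum_unfold_sum_mset)
    also have "\<dots> = card (\<Union>CS)"
      using assms(2) CS by (intro card_Union_disjoint[symmetric]) (auto simp: partition_on_def)
    finally show ?thesis
      using assms(2) by (simp add: partition_on_def)
  qed
  ultimately show ?thesis
    by (simp add: int_partition_def)
qed

lemma block_sizes_remove: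
  "\<lbrakk>finite CS; B \<in> CS\<rbrakk> \<Longrightarrow> block_sizes (CS - {B}) = block_sizes CS - {#card B#}"
  by (simp add: block_sizes_def mset_set_Diff image_mset_Diff)

lemma block_sizes_insert:
  "\<lbrakk>finite CS; B \<notin> CS\<rbrakk> \<Longrightarrow> block_sizes (insert B CS) = add_mset (card B) (block_sizes CS)"
  by (simp add: block_sizes_def)

lemma obtain_blocks_of_sizes:
  assumes "finite CS" "{#x1, x2#} \<subseteq># block_sizes CS"
  obtains B1 B2 where "B1 \<in> CS" "B2 \<in> CS" "B1 \<noteq> B2" "card B1 = x1" "card B2 = x2"
proof -
  have "x1 \<in># block_sizes CS"
    using assms(2) by (simp add: mset_subset_eq_insertD)
  then obtain B1 where B1: "B1 \<in> CS" "card B1 = x1"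
    using assms(1) by (auto simp: block_sizes_def)
  have "x2 \<in># block_sizes (CS - {B1})"
    using assms B1 by (simp add: block_sizes_remove insert_subset_eq_iff)
  then obtain B2 where "B2 \<in> CS - {B1}" "card B2 = x2"
    using assms(1) by (auto simp: block_sizes_def)
  then show thesis
    using that B1 by blast
qed

lemma partition_on_merge:
  assumes "partition_on A CS" "B1 \<in> CS" "B2 \<in> CS"
  shows "partition_on A (insert (B1 \<union> B2) (CS - {B1, B2}))"
proof (rule partition_onI)
  show "\<Union>(insert (B1 \<union> B2) (CS - {B1, B2})) = A"
    using assms by (auto simp: partition_on_def)
  show "{} \<notin> insert (B1 \<union> B2) (CS - {B1, B2})"
    using assms by (auto simp: partition_on_def)
next
  fix p q
  assume "p \<in> insert (B1 \<union> B2) (CS - {B1, B2})" "q \<in> insert (B1 \<union> B2) (CS - {B1, B2})" "p \<noteq> q"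
  then show "disjnt p q"
    using partition_onD2[OF assms(1)] assms(2,3)
    by (auto simp: disjoint_def disjnt_def)
qed

lemma partition_on_Un_blocks_notin:
  assumes "partition_on A CS" "B1 \<in> CS" "B2 \<in> CS"
  shows "B1 \<union> B2 \<notin> CS - {B1, B2}"
proof
  assume B: "B1 \<union> B2 \<in> CS - {B1, B2}"
  then have "(B1 \<union> B2) \<inter> B1 = {}"
    using disjointD[OF partition_onD2[OF assms(1)] _ assms(2)] by blast
  moreover have "B1 \<noteq> {}"
    using partition_onD3[OF assms(1)] assms(2) by blast
  ultimately show False
    by blast
qed

lemma partition_on_single_block:
  assumes "partition_on A CS" "finite CS" "block_sizes CS = {#k#}"
  shows "CS = {A}"
proof -
  have "card CS = 1"
    using arg_cong[OF assms(3), of size] by (simp add: block_sizes_def)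
  then obtain B where "CS = {B}"
    by (auto simp: card_1_singleton_iff)
  then show ?thesis
    using assms(1) by (simp add: partition_on_def)
qed

lemma G_reach_imp_G_edge_rtranclp: "G_reach n S P Q \<Longrightarrow> (G_edge S)\<^sup>*\<^sup>* P Q"
  unfolding G_reach_def by (rule rtranclp_mono[THEN predicate2D, rotated]) auto

lemma sum_blocks_le_of_G_edge_rtranclp:
  fixes T :: "'a set \<Rightarrow> real"
  assumes "(G_edge S)\<^sup>*\<^sup>* {#card A#} Q" and "finite A"
    and superadd: "\<And>C C1. \<lbrakk>finite C; card C \<in> S; C1 \<subseteq> C; C1 \<noteq> {}; C1 \<noteq> C\<rbrakk>
                     \<Longrightarrow> T C1 + T (C - C1) \<le> T C"
  shows "\<lbrakk>partition_on A CS; block_sizes CS = Q\<rbrakk> \<Longrightarrow> (\<Sum>C\<in>CS. T C) \<le> T A"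
  using assms(1)
proof (induction arbitrary: CS rule: rtranclp_induct)
  case base
  then have "CS = {A}"
    using partition_on_single_block finite_elements \<open>finite A\<close> by blast
  then show ?case
    by simp
next
  case (step Q Q')
  obtain x x1 x2 where x: "x \<in># Q" "x \<in> S" "0 < x1" "0 < x2" "x1 + x2 = x"
    and Q': "Q' = Q - {#x#} + {#x1, x2#}"
    using step.hyps(2) by (auto simp: G_edge_def)
  have fin: "finite CS"
    using step.prems(1) \<open>finite A\<close> by (rule finite_elements[rotated])
  obtain B1 B2 where B: "B1 \<in> CS" "B2 \<in> CS" "B1 \<noteq> B2" "card B1 = x1" "card B2 = x2"
    using obtain_blocks_of_sizes[OF fin, of x1 x2] step.prems(2) Q' by auto
  define R where "R = CS - {B1, B2}"
  have disj: "B1 \<inter> B2 = {}" and finB: "finite B1" "finite B2"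
    using step.prems(1) B \<open>finite A\<close>
    by (auto simp: partition_on_def disjoint_def intro: finite_subset)
  have merged: "partition_on A (insert (B1 \<union> B2) R)"
    unfolding R_def using step.prems(1) B(1,2) by (rule partition_on_merge)
  have notin: "B1 \<union> B2 \<notin> R"
    unfolding R_def using step.prems(1) B(1,2) by (rule partition_on_Un_blocks_notin)
  have "block_sizes R = block_sizes (CS - {B1}) - {#x2#}"
    using fin B by (simp add: R_def block_sizes_remove Diff_insert2[of _ B1 "{B2}", simplified])
  also have "\<dots> = Q - {#x#}"
    using fin B Q' step.prems(2) by (simp add: block_sizes_remove)
  finally have "block_sizes R = Q - {#x#}" .
  then have "block_sizes (insert (B1 \<union> B2) R) = Q"
    using fin notin x B disj finB by (simp add: R_def block_sizes_insert card_Un_disjoint)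
  then have IH: "T (B1 \<union> B2) + (\<Sum>C\<in>R. T C) \<le> T A"
    using step.IH[OF merged] fin notin by (simp add: R_def)
  have "B1 \<noteq> {}" "B2 \<noteq> {}"
    using step.prems(1) B by (auto simp: partition_on_def)
  then have "B1 \<noteq> B1 \<union> B2" "B1 \<union> B2 - B1 = B2"
    using disj by auto
  then have "T B1 + T B2 \<le> T (B1 \<union> B2)"
    using superadd[of "B1 \<union> B2" B1] \<open>B1 \<noteq> {}\<close> B x finB disj by (simp add: card_Un_disjoint)
  moreover have "(\<Sum>C\<in>CS. T C) = T B1 + T B2 + (\<Sum>C\<in>R. T C)"
    using fin B by (simp add: R_def sum.remove Diff_insert2[of _ B1 "{B2}", simplified])
  ultimately show ?case
    using IH by linarith
qed

lemma cs_value_le_dp_value: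
  assumes "finite S" "finite A" "partition_on A CS"
    and "(G_edge S)\<^sup>*\<^sup>* {#card A#} (block_sizes CS)"
  shows "cs_value v CS \<le> dp_value S v A"
proof -
  have "cs_value v CS \<le> (\<Sum>C\<in>CS. dp_table S v C)"
    unfolding cs_value_def using assms(2,3)
    by (intro sum_mono dp_table_ge) (auto simp: partition_on_def intro: finite_subset)
  also have "\<dots> \<le> dp_table S v A"
    by (intro sum_blocks_le_of_G_edge_rtranclp[OF assms(4,2) _ assms(3) refl]
        dp_table_split_ge[OF assms(1)])
  finally show ?thesis
    by (simp add: dp_value_def)
qed

lemma Max_cs_values_attained:
  assumes "finite A" "A \<noteq> {}"
  obtains CS where "partition_on A CS" "cs_value v CS = Max (cs_values v A)"
proof -
  have "Max (cs_values v A) \<in> cs_values v A"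
    using assms value_in_cs_values by (intro Max_in finite_cs_values) auto
  then show thesis
    using that by (auto simp: cs_values_def)
qed

theorem theorem1:
  fixes A :: "'a set" and v :: "'a set \<Rightarrow> real" and n :: nat and S1 S2 :: "nat set"
  assumes "finite A" and "card A = n" and "n \<ge> 2"
    and "S1 \<subseteq> {2..n}" and "n \<in> S1"
    and "S2 \<subseteq> {2..n}" and "n \<in> S2"
    and "\<forall>P. int_partition n P \<longrightarrow> G_reach n S1 {#n#} P \<or> G_reach n S2 {#n#} P"
  shows "max (dp_value S1 v A) (dp_value S2 v A)
           = Max {cs_value v CS | CS. partition_on A CS}"
proof -
  have A: "A \<noteq> {}"
    using assms(1-3) by auto
  have S: "finite S1" "finite S2"
    using assms(4,6) finite_subset by blast+
  obtain CS where CS: "partition_on A CS" "cs_value v CS = Max (cs_values v A)"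
    using Max_cs_values_attained[OF assms(1) A] .
  have "int_partition n (block_sizes CS)"
    using int_partition_block_sizes[OF assms(1) CS(1)] assms(2) by simp
  then have "(G_edge S1)\<^sup>*\<^sup>* {#card A#} (block_sizes CS) \<or> (G_edge S2)\<^sup>*\<^sup>* {#card A#} (block_sizes CS)"
    using assms(2,8) G_reach_imp_G_edge_rtranclp by blast
  then have "Max (cs_values v A) \<le> dp_value S1 v A \<or> Max (cs_values v A) \<le> dp_value S2 v A"
    using cs_value_le_dp_value[OF _ assms(1) CS(1)] S CS(2) by metis
  moreover have "dp_value S1 v A \<le> Max (cs_values v A)" "dp_value S2 v A \<le> Max (cs_values v A)"
    using assms(1) A by (simp_all add: dp_value_le_Max_cs_values)
  ultimately show ?thesis
    unfolding cs_values_def by linarith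
qed

end
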